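(* Let $d\in\mathbb N$, $\mathcal D=\{1,\dots,d\}$, $\mathbf u\subseteq\mathcal D$, let $w:\mathbb Z^d\to[1,\infty)$ be a weight function and $f\in \mathrm H^w(\mathbb T^d)$. Then for any weight function $w_{\mathbf u}:\mathbb Z^{|\mathbf u|}\to[1,\infty)$ with $$w_{\mathbf u}(\mathbf k_{\mathbf u})\le w(\mathbf k)\quad\text{for all }\mathbf k\in\mathbb Z^d\text{ with }\mathbf k_{\mathbf u^c}=\mathbf 0,$$ we have $\mathrm P_{\mathbf u}f\in \mathrm H^{w_{\mathbf u}}(\mathbb T^{|\mathbf u|})$ and $f_{\mathbf u}\in \mathrm H^{w_{\mathbf u}}(\mathbb T^{|\mathbf u|})$.
   Context: $\mathbb T=[0,1)$ with periodic identification; $c_{\mathbf k}(g)=\int_{\mathbb T^m} g(\mathbf x)e^{-2\pi i\mathbf k\cdot\mathbf x}\,d\mathbf x$. For a weight $v:\mathbb Z^m\to[1,\infty)$ the Sobolev type space is $\mathrm H^{v}(\mathbb T^m)=\{g\in \mathrm L_2(\mathbb T^m): \|g\|_{\mathrm H^v}=(\sum_{\mathbf k\in\mathbb Z^m}v(\mathbf k)^2|c_{\mathbf k}(g)|^2)^{1/2}<\infty\}$. For $\mathbf u\subseteq\mathcal D$, $\mathbf u^c=\mathcal D\setminus\mathbf u$, $\mathbf x_{\mathbf u}=(x_i)_{i\in\mathbf u}$, and $\mathbf k_{\mathbf u}$ analogously. The projection is $\mathrm P_{\mathbf u}f(\mathbf x_{\mathbf u})=\int_{\mathbb T^{|\mathbf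 u^c|}}f(\mathbf x)\,d\mathbf x_{\mathbf u^c}$; the ANOVA terms are defined recursively by $f_{\mathbf u}=\mathrm P_{\mathbf u}f-\sum_{\mathbf v\subsetneq\mathbf u}f_{\mathbf v}$; both are regarded as functions on $\mathbb T^{|\mathbf u|}$. Convention $\mathbb Z^{0}=\{0\}$. *)

theory Defs
  imports "HOL-Probability.Probability"
begin

text \<open>The torus T^I for a finite index set I of coordinates: points are extensional
  functions nat => real (undefined outside I) with components in [0,1), equipped with
  the product of Lebesgue measure on [0,1).\<close>
definition torus :: "nat set \<Rightarrow> (nat \<Rightarrow> real) measure" where
  "torus I = PiM I (\<lambda>_. restrict_space lborel {0..<1::real})"

definition lattice :: "nat set \<Rightarrow> (nat \<Rightarrow> int) set" where
  "lattice I = {k. \<forall>i. i \<notin> I \<longrightarrow> k i = 0}"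

definition fourier_coeff :: "nat set \<Rightarrow> ((nat \<Rightarrow> real) \<Rightarrow> complex) \<Rightarrow> (nat \<Rightarrow> int) \<Rightarrow> complex" where
  "fourier_coeff I g k =
     integral\<^sup>L (torus I) (\<lambda>x. g x * cis (- 2 * pi * (\<Sum>i\<in>I. real_of_int (k i) * x i)))"

definition L2 :: "nat set \<Rightarrow> ((nat \<Rightarrow> real) \<Rightarrow> complex) \<Rightarrow> bool" where
  "L2 I g \<longleftrightarrow> g \<in> borel_measurable (torus I) \<and> integrable (torus I) (\<lambda>x. (cmod (g x))\<^sup>2)"

definition weight :: "nat set \<Rightarrow> ((nat \<Rightarrow> int) \<Rightarrow> real) \<Rightarrow> bool" where
  "weight I v \<longleftrightarrow> (\<forall>k\<in>lattice I. 1 \<le> v k)"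

definition sobolev :: "nat set \<Rightarrow> ((nat \<Rightarrow> int) \<Rightarrow> real) \<Rightarrow> ((nat \<Rightarrow> real) \<Rightarrow> complex) \<Rightarrow> bool" where
  "sobolev I v g \<longleftrightarrow> L2 I g \<and>
     (\<lambda>k. (v k)\<^sup>2 * (cmod (fourier_coeff I g k))\<^sup>2) summable_on lattice I"

definition proj :: "nat set \<Rightarrow> ((nat \<Rightarrow> real) \<Rightarrow> complex) \<Rightarrow> nat set \<Rightarrow> (nat \<Rightarrow> real) \<Rightarrow> complex" where
  "proj D f u y = integral\<^sup>L (torus (D - u)) (\<lambda>z. f (merge u (D - u) (y, z)))"

function anova :: "nat set \<Rightarrow> ((nat \<Rightarrow> real) \<Rightarrow> complex) \<Rightarrow> nat set \<Rightarrow> (nat \<Rightarrow> real) \<Rightarrow> complex" where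
  "anova D f u = (if finite u then
      (\<lambda>x. proj D f u x - (\<Sum>v\<in>{v. v \<subset> u}. anova D f v (restrict x v)))
    else undefined)"
  by auto
termination
  by (relation "Wellfounded.measure (\<lambda>(D, f, u). card u)") (auto intro: psubset_card_mono)

end

(* For a frequency k supported in u, Fubini on T^D = T^u x T^(D-u) shows that the k-th Fourier
   coefficient of P_u f equals that of f, so the H^(w_u)-norm of P_u f is dominated by the
   H^w-norm of f, and Jensen's inequality puts P_u f in L2. A function of x_v, lifted to T^u for
   v a subset of u, keeps its Fourier coefficients on Z^v and has vanishing ones elsewhere, so it
   stays in H^(w_u). As H^(w_u) is a vector space, f_u = P_u f - (sum of f_v over v properly
   contained in u) lies in it by induction on u. *)

theory Submission
  imports Defs
begin

lemma cis_sum: "finite A \<Longrightarrow> cis (\<Sum>i\<in>A. f i) = (\<Prod>i\<in>A. cis (f i))"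
  by (induction A rule: finite_induct) (auto simp: cis_mult[symmetric])

lemma norm_add_squared_le:
  fixes a b :: "'a::real_normed_vector"
  shows "(norm (a + b))\<^sup>2 \<le> 2 * (norm a)\<^sup>2 + 2 * (norm b)\<^sup>2"
proof -
  have "(norm (a + b))\<^sup>2 \<le> (norm a + norm b)\<^sup>2"
    by (simp add: power_mono norm_triangle_ineq)
  also have "\<dots> \<le> 2 * (norm a)\<^sup>2 + 2 * (norm b)\<^sup>2"
    using zero_le_power2[of "norm a - norm b"] unfolding power2_sum power2_diff by linarith
  finally show ?thesis .
qed

lemma (in prob_space) norm_integral_squared_le:
  fixes g :: "'a \<Rightarrow> 'b::{banach, second_countable_topology}"
  assumes "g \<in> borel_measurable M"
  shows "ennreal ((norm (integral\<^sup>L M g))\<^sup>2) \<le> (\<integral>\<^sup>+z. ennreal ((norm (g z))\<^sup>2) \<partial>M)"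
proof -
  have "ennreal (norm (integral\<^sup>L M g)) \<le> (\<integral>\<^sup>+z. ennreal (norm (g z)) \<partial>M)"
    by (cases "integrable M g") (simp_all add: integral_norm_bound_ennreal not_integrable_integral_eq)
  then have "(ennreal (norm (integral\<^sup>L M g)))\<^sup>2 \<le> (\<integral>\<^sup>+z. ennreal (norm (g z)) * 1 \<partial>M)\<^sup>2"
    by (simp add: power_mono)
  also have "\<dots> \<le> (\<integral>\<^sup>+z. (ennreal (norm (g z)))\<^sup>2 \<partial>M) * (\<integral>\<^sup>+z. 1 ^ 2 \<partial>M)"
    using assms by (intro Cauchy_Schwarz_nn_integral) auto
  finally show ?thesis
    by (simp add: ennreal_power[symmetric] emeasure_space_1)
qed

section \<open>The torus as a product probability space\<close>

abbreviation lborel01 :: "real measure" where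
  "lborel01 \<equiv> restrict_space lborel {0..<1}"

lemma prob_space_lborel01: "prob_space lborel01"
  by (rule prob_spaceI) (simp add: space_restrict_space emeasure_restrict_space)

interpretation torus_prod: product_prob_space "\<lambda>_::nat. lborel01" UNIV
  by (simp add: product_prob_space_def product_prob_space_axioms_def product_sigma_finite_def
      prob_space_lborel01 prob_space_imp_sigma_finite)

lemma prob_space_torus: "prob_space (torus I)"
  unfolding torus_def by (rule prob_space_PiM) (rule prob_space_lborel01)

lemma measurable_torus_component:
  assumes "i \<in> I"
  shows "(\<lambda>x. x i) \<in> borel_measurable (torus I)"
proof -
  have "(\<lambda>x. x i) \<in> measurable (torus I) lborel01"
    unfolding torus_def using assms by (rule measurable_component_singleton)
  then show ?thesis
    by (rule measurable_compose) (simp add: measurable_restrict_space1)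
qed

lemma measurable_merge_torus:
  assumes "u \<subseteq> D"
  shows "merge u (D - u) \<in> measurable (torus u \<Otimes>\<^sub>M torus (D - u)) (torus D)"
  using measurable_merge[of u "D - u" "\<lambda>_. lborel01"] assms
  by (simp add: torus_def Un_absorb1)

lemma integral_torus_split:
  fixes f :: "(nat \<Rightarrow> real) \<Rightarrow> complex"
  assumes "finite D" "u \<subseteq> D" "integrable (torus D) f"
  shows "integral\<^sup>L (torus D) f = (\<integral>y. (\<integral>z. f (merge u (D - u) (y, z)) \<partial>torus (D - u)) \<partial>torus u)"
  using torus_prod.product_integral_fold[of u "D - u" f] assms finite_subset[OF _ assms(1)]
  by (simp add: torus_def Un_absorb1)

lemma nn_integral_torus_split:
  assumes "finite D" "u \<subseteq> D" "f \<in> borel_measurable (torus D)"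
  shows "(\<integral>\<^sup>+x. f x \<partial>torus D) = (\<integral>\<^sup>+y. (\<integral>\<^sup>+z. f (merge u (D - u) (y, z)) \<partial>torus (D - u)) \<partial>torus u)"
  using torus_prod.product_nn_integral_fold[of u "D - u" f] assms finite_subset[OF _ assms(1)]
  by (simp add: torus_def Un_absorb1)

section \<open>Characters\<close>

definition torus_char :: "nat set \<Rightarrow> (nat \<Rightarrow> int) \<Rightarrow> (nat \<Rightarrow> real) \<Rightarrow> complex" where
  "torus_char I k x = cis (- 2 * pi * (\<Sum>i\<in>I. real_of_int (k i) * x i))"

lemma fourier_coeff_eq: "fourier_coeff I g k = (\<integral>x. g x * torus_char I k x \<partial>torus I)"
  by (simp add: fourier_coeff_def torus_char_def)

lemma norm_torus_char [simp]: "norm (torus_char I k x) = 1"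
  by (simp add: torus_char_def)

lemma measurable_torus_char:
  assumes "I \<subseteq> J"
  shows "torus_char I k \<in> borel_measurable (torus J)"
  unfolding torus_char_def using assms
  by (intro measurable_compose[OF _ borel_measurable_continuous_onI[of cis]] borel_measurable_times
      borel_measurable_const borel_measurable_sum measurable_torus_component)
    (auto intro: continuous_intros)

lemma torus_char_merge:
  assumes "finite D" "u \<subseteq> D"
  shows "torus_char D k (merge u (D - u) (y, z)) = torus_char u k y * torus_char (D - u) k z"
proof -
  have "(\<Sum>i\<in>D. real_of_int (k i) * merge u (D - u) (y, z) i)
      = (\<Sum>i\<in>u. real_of_int (k i) * merge u (D - u) (y, z) i)
        + (\<Sum>i\<in>D - u. real_of_int (k i) * merge u (D - u) (y, z) i)"
    by (subst sum.subset_diff[OF assms(2,1)]) (rule add.commute)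
  also have "\<dots> = (\<Sum>i\<in>u. real_of_int (k i) * y i) + (\<Sum>i\<in>D - u. real_of_int (k i) * z i)"
    by (intro arg_cong2[where f = "(+)"] sum.cong) (auto simp: merge_def)
  finally show ?thesis by (simp add: torus_char_def distrib_left cis_mult)
qed

lemma lattice_mono: "v \<subseteq> u \<Longrightarrow> lattice v \<subseteq> lattice u"
  by (auto simp: lattice_def)

lemma torus_char_lattice_outside:
  assumes "k \<in> lattice u" "J \<inter> u = {}"
  shows "torus_char J k z = 1"
proof -
  have "(\<Sum>i\<in>J. real_of_int (k i) * z i) = 0"
    using assms by (intro sum.neutral) (auto simp: lattice_def)
  then show ?thesis by (simp add: torus_char_def)
qed

lemma integral_lborel01_cis:
  "integral\<^sup>L lborel01 (\<lambda>t. cis (- 2 * pi * (real_of_int n * t))) = (if n = 0 then 1 else 0)"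
proof (cases "n = 0")
  case True
  then show ?thesis
    using prob_space.prob_space[OF prob_space_lborel01] by (simp add: space_restrict_space)
next
  case False
  define c where "c = complex_of_real (- 2 * pi * real_of_int n) * \<i>"
  have c: "c \<noteq> 0" using False by (simp add: c_def)
  have exp_c: "cis (- 2 * pi * (real_of_int n * t)) = exp (t *\<^sub>R c)" for t
    by (simp add: c_def cis_conv_exp scaleR_conv_of_real algebra_simps)
  have "integral\<^sup>L lborel01 (\<lambda>t. cis (- 2 * pi * (real_of_int n * t)))
      = (LBINT t:{0..<1}. exp (t *\<^sub>R c))"
    unfolding exp_c[symmetric] by (simp add: integral_restrict_space set_lebesgue_integral_def)
  also have "\<dots> = (LBINT t=ereal 0..ereal 1. exp (t *\<^sub>R c))"
    by (auto intro!: set_integral_discrete_difference[where X = "{0, 1}"]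
        simp: interval_lebesgue_integral_def einterval_iff zero_ereal_def one_ereal_def)
  also have "\<dots> = exp (1 *\<^sub>R c) / c - exp (0 *\<^sub>R c) / c"
    by (rule interval_integral_FTC_finite[where F = "\<lambda>t. exp (t *\<^sub>R c) / c"],
        intro continuous_intros, (rule derivative_eq_intros exp_scaleR_has_vector_derivative_right)+)
      (use c in simp)
  also have "exp (1 *\<^sub>R c) = 1"
    using exp_c[of 1] cis_multiple_2pi[of "real_of_int (- n)"] by simp
  finally show ?thesis using False by simp
qed

lemma integral_torus_char:
  assumes "finite I"
  shows "integral\<^sup>L (torus I) (torus_char I k) = (if \<forall>i\<in>I. k i = 0 then 1 else 0)"
proof -
  have meas: "(\<lambda>t. cis (- 2 * pi * (real_of_int m * t))) \<in> borel_measurable lborel01" for m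
    using borel_measurable_continuous_onI[of "\<lambda>t. cis (- 2 * pi * (real_of_int m * t))"]
    by (simp add: measurable_restrict_space1 continuous_intros)
  have "integral\<^sup>L (torus I) (torus_char I k)
      = (\<integral>x. (\<Prod>i\<in>I. cis (- 2 * pi * (real_of_int (k i) * x i))) \<partial>torus I)"
    using assms by (simp add: torus_char_def[abs_def] sum_distrib_left cis_sum)
  also have "\<dots> = (\<Prod>i\<in>I. integral\<^sup>L lborel01 (\<lambda>t. cis (- 2 * pi * (real_of_int (k i) * t))))"
    unfolding torus_def
    by (intro torus_prod.product_integral_prod[OF assms]
        torus_prod.M.integrable_const_bound[where B = 1] meas) simp
  also have "\<dots> = (\<Prod>i\<in>I. if k i = 0 then 1 else 0)"
    by (simp only: integral_lborel01_cis)
  also have "\<dots> = (if \<forall>i\<in>I. k i = 0 then 1 else 0)"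
    using assms by (induction I rule: finite_induct) auto
  finally show ?thesis .
qed

section \<open>The spaces L2 and H^v\<close>

lemma L2_imp_integrable:
  assumes "L2 I g"
  shows "integrable (torus I) g"
proof -
  interpret prob_space "torus I" by (rule prob_space_torus)
  have meas: "g \<in> borel_measurable (torus I)"
    using assms by (simp add: L2_def)
  have "integrable (torus I) (\<lambda>x. g x ^ 2)"
    using assms by (subst integrable_norm_iff[symmetric]) (auto simp: L2_def norm_power meas borel_measurable_power)
  then show ?thesis by (rule square_integrable_imp_integrable[OF meas])
qed

lemma integrable_L2_mult_char:
  assumes "L2 I g"
  shows "integrable (torus I) (\<lambda>x. g x * torus_char I k x)"
proof (rule Bochner_Integration.integrable_bound)
  show "integrable (torus I) (\<lambda>x. norm (g x))"
    using L2_imp_integrable[OF assms] by (rule integrable_norm)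
  show "(\<lambda>x. g x * torus_char I k x) \<in> borel_measurable (torus I)"
    using assms measurable_torus_char[OF subset_refl] unfolding L2_def
    by (intro borel_measurable_times) auto
qed (simp add: norm_mult)

lemma L2_add:
  assumes "L2 I g" "L2 I h"
  shows "L2 I (\<lambda>x. g x + h x)"
proof -
  have [measurable]: "g \<in> borel_measurable (torus I)" "h \<in> borel_measurable (torus I)"
    using assms by (simp_all add: L2_def)
  have "integrable (torus I) (\<lambda>x. (cmod (g x + h x))\<^sup>2)"
  proof (rule Bochner_Integration.integrable_bound)
    show "integrable (torus I) (\<lambda>x. 2 * (cmod (g x))\<^sup>2 + 2 * (cmod (h x))\<^sup>2)"
      using assms unfolding L2_def by (intro Bochner_Integration.integrable_add integrable_mult_right) auto
  qed (use norm_add_squared_le in auto)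
  then show ?thesis by (simp add: L2_def)
qed

lemma L2_cmult:
  assumes "L2 I g"
  shows "L2 I (\<lambda>x. a * g x)"
  using assms by (auto simp: L2_def norm_mult power_mult_distrib intro: integrable_mult_right)

lemma fourier_coeff_add:
  assumes "L2 I g" "L2 I h"
  shows "fourier_coeff I (\<lambda>x. g x + h x) k = fourier_coeff I g k + fourier_coeff I h k"
  unfolding fourier_coeff_eq distrib_right
  by (rule Bochner_Integration.integral_add[OF assms[THEN integrable_L2_mult_char]])

lemma fourier_coeff_cmult: "fourier_coeff I (\<lambda>x. a * g x) k = a * fourier_coeff I g k"
  unfolding fourier_coeff_eq mult.assoc by (rule integral_mult_right_zero)

lemma sobolev_zero: "sobolev I v (\<lambda>_. 0)"
  by (simp add: sobolev_def L2_def fourier_coeff_def)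

lemma sobolev_add:
  assumes "sobolev I v g" "sobolev I v h"
  shows "sobolev I v (\<lambda>x. g x + h x)"
proof -
  have L2: "L2 I g" "L2 I h"
    using assms by (simp_all add: sobolev_def)
  have "(\<lambda>k. (v k)\<^sup>2 * (cmod (fourier_coeff I (\<lambda>x. g x + h x) k))\<^sup>2) summable_on lattice I"
  proof (rule summable_on_comparison_test)
    show "(\<lambda>k. 2 * ((v k)\<^sup>2 * (cmod (fourier_coeff I g k))\<^sup>2)
        + 2 * ((v k)\<^sup>2 * (cmod (fourier_coeff I h k))\<^sup>2)) summable_on lattice I"
      using assms unfolding sobolev_def by (intro summable_on_add summable_on_cmult_right) auto
    show "(v k)\<^sup>2 * (cmod (fourier_coeff I (\<lambda>x. g x + h x) k))\<^sup>2
        \<le> 2 * ((v k)\<^sup>2 * (cmod (fourier_coeff I g k))\<^sup>2)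
          + 2 * ((v k)\<^sup>2 * (cmod (fourier_coeff I h k))\<^sup>2)" for k
      using mult_left_mono[OF norm_add_squared_le zero_le_power2[of "v k"],
          of "fourier_coeff I g k" "fourier_coeff I h k"]
      by (simp add: fourier_coeff_add[OF L2] algebra_simps)
  qed simp
  then show ?thesis using L2_add[OF L2] by (simp add: sobolev_def)
qed

lemma sobolev_cmult:
  assumes "sobolev I v g"
  shows "sobolev I v (\<lambda>x. a * g x)"
proof -
  have "(\<lambda>k. (cmod a)\<^sup>2 * ((v k)\<^sup>2 * (cmod (fourier_coeff I g k))\<^sup>2)) summable_on lattice I"
    using assms by (intro summable_on_cmult_right) (simp add: sobolev_def)
  then show ?thesis
    using assms L2_cmult
    by (simp add: sobolev_def fourier_coeff_cmult norm_mult power_mult_distrib ac_simps)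
qed

lemma sobolev_diff:
  assumes "sobolev I v g" "sobolev I v h"
  shows "sobolev I v (\<lambda>x. g x - h x)"
  using sobolev_add[OF assms(1) sobolev_cmult[OF assms(2), of "- 1"]] by simp

lemma sobolev_sum:
  assumes "finite S" "\<And>s. s \<in> S \<Longrightarrow> sobolev I v (g s)"
  shows "sobolev I v (\<lambda>x. \<Sum>s\<in>S. g s x)"
  using assms by (induction S rule: finite_induct) (auto intro: sobolev_zero sobolev_add)

section \<open>Projections\<close>

lemma measurable_proj:
  assumes "u \<subseteq> D" "f \<in> borel_measurable (torus D)"
  shows "proj D f u \<in> borel_measurable (torus u)"
proof -
  interpret prob_space "torus (D - u)" by (rule prob_space_torus)
  have "(\<lambda>(y, z). f (merge u (D - u) (y, z))) \<in> borel_measurable (torus u \<Otimes>\<^sub>M torus (D - u))"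
    using measurable_compose[OF measurable_merge_torus[OF assms(1)] assms(2)]
    by (simp add: case_prod_beta')
  then show ?thesis
    unfolding proj_def[abs_def] by (rule borel_measurable_lebesgue_integral)
qed

lemma L2_proj:
  assumes "finite D" "u \<subseteq> D" "L2 D f"
  shows "L2 u (proj D f u)"
proof -
  have f: "f \<in> borel_measurable (torus D)"
    using assms(3) by (simp add: L2_def)
  have proj: "proj D f u \<in> borel_measurable (torus u)"
    by (rule measurable_proj[OF assms(2) f])
  have "(\<integral>\<^sup>+y. ennreal ((cmod (proj D f u y))\<^sup>2) \<partial>torus u)
      \<le> (\<integral>\<^sup>+y. (\<integral>\<^sup>+z. ennreal ((cmod (f (merge u (D - u) (y, z))))\<^sup>2) \<partial>torus (D - u)) \<partial>torus u)"
  proof (rule nn_integral_mono)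
    fix y assume "y \<in> space (torus u)"
    with measurable_compose[OF measurable_merge_torus[OF assms(2)] f]
    have "(\<lambda>z. f (merge u (D - u) (y, z))) \<in> borel_measurable (torus (D - u))"
      by (rule measurable_Pair2)
    then show "ennreal ((cmod (proj D f u y))\<^sup>2)
        \<le> (\<integral>\<^sup>+z. ennreal ((cmod (f (merge u (D - u) (y, z))))\<^sup>2) \<partial>torus (D - u))"
      unfolding proj_def by (rule prob_space.norm_integral_squared_le[OF prob_space_torus])
  qed
  also have "\<dots> = (\<integral>\<^sup>+x. ennreal ((cmod (f x))\<^sup>2) \<partial>torus D)"
    using f by (intro nn_integral_torus_split[symmetric] assms(1,2)) measurable
  also have "\<dots> < \<infinity>"
    using assms(3) by (simp add: L2_def integrable_iff_bounded)
  finally show ?thesis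
    using proj by (simp add: L2_def integrable_iff_bounded borel_measurable_power)
qed

lemma fourier_coeff_proj:
  assumes "finite D" "u \<subseteq> D" "L2 D f" "k \<in> lattice u"
  shows "fourier_coeff u (proj D f u) k = fourier_coeff D f k"
proof -
  have char_outside: "torus_char (D - u) k z = 1" for z
    using assms(4) by (rule torus_char_lattice_outside) auto
  have "fourier_coeff D f k
      = (\<integral>y. (\<integral>z. f (merge u (D - u) (y, z)) * torus_char D k (merge u (D - u) (y, z))
          \<partial>torus (D - u)) \<partial>torus u)"
    unfolding fourier_coeff_eq
    by (rule integral_torus_split[OF assms(1,2) integrable_L2_mult_char[OF assms(3)]])
  also have "\<dots> = (\<integral>y. proj D f u y * torus_char u k y \<partial>torus u)"
    using assms(1,2) char_outside by (simp add: torus_char_merge proj_def)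
  finally show ?thesis
    by (simp add: fourier_coeff_eq)
qed

lemma sobolev_proj:
  assumes "finite D" "u \<subseteq> D" "sobolev D w f" "weight u v" "\<forall>k\<in>lattice u. v k \<le> w k"
  shows "sobolev u v (proj D f u)"
proof -
  have L2: "L2 D f"
    using assms(3) by (simp add: sobolev_def)
  have "(\<lambda>k. (v k)\<^sup>2 * (cmod (fourier_coeff u (proj D f u) k))\<^sup>2) summable_on lattice u"
  proof (rule summable_on_comparison_test)
    show "(\<lambda>k. (w k)\<^sup>2 * (cmod (fourier_coeff D f k))\<^sup>2) summable_on lattice u"
      using assms(3) lattice_mono[OF assms(2)] by (auto simp: sobolev_def intro: summable_on_subset_banach)
    fix k assume k: "k \<in> lattice u"
    then have "(v k)\<^sup>2 \<le> (w k)\<^sup>2"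
      using assms(4,5) by (intro power_mono) (auto simp: weight_def)
    then show "(v k)\<^sup>2 * (cmod (fourier_coeff u (proj D f u) k))\<^sup>2 \<le> (w k)\<^sup>2 * (cmod (fourier_coeff D f k))\<^sup>2"
      by (simp add: fourier_coeff_proj[OF assms(1,2) L2 k] mult_right_mono)
  qed simp
  then show ?thesis
    using L2_proj[OF assms(1,2) L2] by (simp add: sobolev_def)
qed

section \<open>Functions depending on fewer variables\<close>

lemma L2_restrict:
  assumes "finite u" "v \<subseteq> u" "L2 v g"
  shows "L2 u (\<lambda>x. g (restrict x v))"
proof -
  have g: "g \<in> borel_measurable (torus v)"
    using assms(3) by (simp add: L2_def)
  have restrict: "(\<lambda>x. restrict x v) \<in> measurable (torus u) (torus v)"
    unfolding torus_def by (rule measurable_restrict_subset[OF assms(2)])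
  have "torus v = distr (torus u) (torus v) (\<lambda>x. restrict x v)"
    unfolding torus_def by (rule torus_prod.distr_restrict[OF assms(2,1)])
  then have "integrable (torus u) (\<lambda>x. (cmod (g (restrict x v)))\<^sup>2)"
    using assms(3) integrable_distr_eq[OF restrict, of "\<lambda>y. (cmod (g y))\<^sup>2"] g
    by (simp add: L2_def borel_measurable_power)
  then show ?thesis
    using measurable_compose[OF restrict g] by (simp add: L2_def)
qed

lemma fourier_coeff_restrict:
  assumes "finite u" "v \<subseteq> u" "L2 v g" "k \<in> lattice u"
  shows "fourier_coeff u (\<lambda>x. g (restrict x v)) k = (if k \<in> lattice v then fourier_coeff v g k else 0)"
proof -
  define C where "C = integral\<^sup>L (torus (u - v)) (torus_char (u - v) k)"
  have C: "C = (if k \<in> lattice v then 1 else 0)"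
    unfolding C_def using assms(1,2,4) by (simp add: integral_torus_char lattice_def) blast
  have "fourier_coeff u (\<lambda>x. g (restrict x v)) k
      = (\<integral>y. (\<integral>z. g (restrict (merge v (u - v) (y, z)) v) * torus_char u k (merge v (u - v) (y, z))
          \<partial>torus (u - v)) \<partial>torus v)"
    unfolding fourier_coeff_eq
    by (rule integral_torus_split[OF assms(1,2) integrable_L2_mult_char[OF L2_restrict[OF assms(1-3)]]])
  also have "\<dots> = (\<integral>y. g y * torus_char v k y * C \<partial>torus v)"
  proof (rule Bochner_Integration.integral_cong[OF refl])
    fix y assume "y \<in> space (torus v)"
    then have "restrict (merge v (u - v) (y, z)) v = y" for z
      by (simp add: torus_def space_PiM PiE_iff extensional_restrict)
    then show "(\<integral>z. g (restrict (merge v (u - v) (y, z)) v) * torus_char u k (merge v (u - v) (y, z))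
        \<partial>torus (u - v)) = g y * torus_char v k y * C"
      by (simp add: C_def torus_char_merge[OF assms(1,2)] mult.assoc)
  qed
  also have "\<dots> = fourier_coeff v g k * C"
    unfolding fourier_coeff_eq by (rule integral_mult_left_zero)
  finally show ?thesis
    using C by simp
qed

lemma sobolev_restrict:
  assumes "finite u" "v \<subseteq> u" "sobolev v w g"
  shows "sobolev u w (\<lambda>x. g (restrict x v))"
proof -
  have L2: "L2 v g"
    using assms(3) by (simp add: sobolev_def)
  have "(\<lambda>k. (w k)\<^sup>2 * (cmod (fourier_coeff v g k))\<^sup>2) summable_on lattice v
    \<longleftrightarrow> (\<lambda>k. (w k)\<^sup>2 * (cmod (fourier_coeff u (\<lambda>x. g (restrict x v)) k))\<^sup>2) summable_on lattice u"
    using lattice_mono[OF assms(2)]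
    by (intro summable_on_cong_neutral) (auto simp: fourier_coeff_restrict[OF assms(1,2) L2])
  then show ?thesis
    using assms(3) L2_restrict[OF assms(1,2) L2] by (simp add: sobolev_def)
qed

section \<open>ANOVA terms\<close>

lemma sobolev_anova:
  assumes "finite D" "u \<subseteq> D" "sobolev D w f" "weight u v" "\<forall>k\<in>lattice u. v k \<le> w k"
  shows "sobolev u v (anova D f u)"
  using finite_subset[OF assms(2,1)] assms(2,4,5)
proof (induction u rule: finite_psubset_induct)
  case (psubset u)
  have anova_u: "anova D f u = (\<lambda>x. proj D f u x - (\<Sum>u'\<in>{u'. u' \<subset> u}. anova D f u' (restrict x u')))"
    using anova.simps[of D f u] psubset.hyps(1) by (simp only: if_True)
  have "sobolev u v (\<lambda>x. anova D f u' (restrict x u'))" if "u' \<subset> u" for u'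
  proof -
    have "lattice u' \<subseteq> lattice u"
      using that by (intro lattice_mono) blast
    then have "sobolev u' v (anova D f u')"
      using that psubset.prems by (intro psubset.IH) (auto simp: weight_def)
    then show ?thesis
      using psubset.hyps(1) that by (intro sobolev_restrict) auto
  qed
  moreover have "finite {u'. u' \<subset> u}"
    by (rule finite_subset[where B = "Pow u"]) (auto simp: psubset.hyps(1))
  ultimately show ?case
    unfolding anova_u
    using sobolev_proj[OF assms(1) psubset.prems(1) assms(3) psubset.prems(2,3)]
    by (intro sobolev_diff sobolev_sum) auto
qed

theorem theorem3p10:
  fixes d :: nat and u :: "nat set"
    and w wu :: "(nat \<Rightarrow> int) \<Rightarrow> real"
    and f :: "(nat \<Rightarrow> real) \<Rightarrow> complex"
  assumes "u \<subseteq> {1..d}"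
    and "weight {1..d} w"
    and "sobolev {1..d} w f"
    and "weight u wu"
    and "\<forall>k\<in>lattice {1..d}. (\<forall>i\<in>{1..d} - u. k i = 0) \<longrightarrow>
           wu (\<lambda>i. if i \<in> u then k i else 0) \<le> w k"
  shows "sobolev u wu (proj {1..d} f u) \<and> sobolev u wu (anova {1..d} f u)"
proof -
  have dominated: "\<forall>k\<in>lattice u. wu k \<le> w k"
  proof
    fix k assume k: "k \<in> lattice u"
    then have "k \<in> lattice {1..d}" "\<forall>i\<in>{1..d} - u. k i = 0"
      using lattice_mono[OF assms(1)] by (auto simp: lattice_def)
    then have "wu (\<lambda>i. if i \<in> u then k i else 0) \<le> w k"
      using assms(5) by blast
    moreover have "(\<lambda>i. if i \<in> u then k i else 0) = k"
      using k by (auto simp: lattice_def)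
    ultimately show "wu k \<le> w k"
      by simp
  qed
  show ?thesis
    using sobolev_proj[OF _ assms(1,3,4) dominated] sobolev_anova[OF _ assms(1,3,4) dominated]
    by simp
qed

end
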